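(* In the setting below, assume in addition that $\Sigma$ is connected and that the set $Z=\{s\in(0,\infty):2sF''(s)+F'(s)=0\}$ is a discrete subset of $(0,\infty)$. If $X$ satisfies the Euler–Lagrange equations of $\int_\Sigma d^d\xi\,F(\gamma_v)$, then $\gamma_v$ is equal to a constant $c>0$ on $\Sigma$. If moreover $F'(c)\neq0$, then $X$ also satisfies the Euler–Lagrange equations of the Schild action $\int_\Sigma d^d\xi\,\gamma_v$ and of the Nambu–Goto action $\int_\Sigma d^d\xi\,\sqrt{\gamma_v}$.
   Context: Setting: $\Sigma\subset\mathbb{R}^d$ open with coordinates $\xi^a$, $M\subset\mathbb{R}^D$ open, $F$ a $C^2$ function on $(0,\infty)$, $X:\Sigma\to M$ smooth with $\gamma_v>0$. A volume metric (of degree $d$) on $M$ is a smooth field of components $V_{[\mu_1\cdots\mu_d][\nu_1\cdots\nu_d]}(X)$ that is totally antisymmetric within each of the two $d$-tuples of indices and symmetric under exchange of the two $d$-tuples. Define $\sigma^{\mu_1\cdots\mu_d}=\epsilon^{a_1\cdots a_d}\partial_{a_1}X^{\mu_1}\cdots\partial_{a_d}X^{\mu_d}$ ($\epsilon$ the Levi-Civita symbol) and $\gamma_v=V_{[\mu_1\cdots\mu_d][\nu_1\cdots\nu_d]}(X)\,\sigma^{\mu_1\cdots\mu_d}\sigma^{\nu_1\cdots\nu_d}$. The Euler–Lagrange equations of $\int d^d\xi\,L(X,\partial X)$ are $\partial L/\partial X^\alpha-\partial_a\big(\partial L/\partial(\partial_aX^\alpha)\big)=0$. Riemannian and (for $d=2$)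 areal metrics are special cases of volume metrics. *)

theory Defs
  imports "HOL-Analysis.Analysis" "HOL-Combinatorics.Permutations"
begin

definition dirderiv :: "('a::real_normed_vector \<Rightarrow> real) \<Rightarrow> 'a \<Rightarrow> 'a \<Rightarrow> real" where
  "dirderiv f x v = deriv (\<lambda>t. f (x + t *\<^sub>R v)) 0"

fun iter_partial :: "'n::finite list \<Rightarrow> (real^'n \<Rightarrow> real) \<Rightarrow> real^'n \<Rightarrow> real" where
  "iter_partial [] f = f"
| "iter_partial (i # is) f = (\<lambda>x. dirderiv (iter_partial is f) x (axis i 1))"

definition smooth_on :: "(real^'n::finite) set \<Rightarrow> (real^'n \<Rightarrow> real) \<Rightarrow> bool" where
  "smooth_on S f \<longleftrightarrow> (\<forall>is. \<forall>x\<in>S. iter_partial is f differentiable (at x))"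

definition levi_civita :: "('d::finite \<Rightarrow> 'd) \<Rightarrow> real" where
  "levi_civita a = (if a permutes (UNIV::'d set) then of_int (sign a) else 0)"

text \<open>P $ a $ mu plays the role of the derivative d_a X^mu.
  sigma^{mu_1...mu_d} = eps^{a_1...a_d} P_{a_1}^{mu_1} ... P_{a_d}^{mu_d};
  a d-tuple of target indices is a map mu :: 'd => 'D (position j |-> mu_j).\<close>
definition sigma :: "real^'D^'d::finite \<Rightarrow> ('d \<Rightarrow> 'D::finite) \<Rightarrow> real" where
  "sigma P \<mu> = (\<Sum>a\<in>(UNIV::('d \<Rightarrow> 'd) set). levi_civita a * (\<Prod>j\<in>UNIV. P $ (a j) $ (\<mu> j)))"

definition gamma_v ::
  "(real^'D \<Rightarrow> ('d \<Rightarrow> 'D) \<Rightarrow> ('d \<Rightarrow> 'D) \<Rightarrow> real) \<Rightarrow> real^'D::finite \<Rightarrow> real^'D^'d::finite \<Rightarrow> real" where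
  "gamma_v V x P = (\<Sum>\<mu>\<in>UNIV. \<Sum>\<nu>\<in>UNIV. V x \<mu> \<nu> * sigma P \<mu> * sigma P \<nu>)"

definition volume_metric ::
  "(real^'D::finite) set \<Rightarrow> (real^'D \<Rightarrow> ('d::finite \<Rightarrow> 'D) \<Rightarrow> ('d \<Rightarrow> 'D) \<Rightarrow> real) \<Rightarrow> bool" where
  "volume_metric M V \<longleftrightarrow>
     (\<forall>\<mu> \<nu>. smooth_on M (\<lambda>x. V x \<mu> \<nu>)) \<and>
     (\<forall>x\<in>M. \<forall>\<mu> \<nu>. V x \<mu> \<nu> = V x \<nu> \<mu>) \<and>
     (\<forall>x\<in>M. \<forall>\<mu> \<nu> i j. i \<noteq> j \<longrightarrow> V x (\<mu>(i := \<mu> j, j := \<mu> i)) \<nu> = - V x \<mu> \<nu>)"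

definition jac :: "(real^'d::finite \<Rightarrow> real^'D::finite) \<Rightarrow> real^'d \<Rightarrow> real^'D^'d" where
  "jac X \<xi> = (\<chi> a \<mu>. dirderiv (\<lambda>\<eta>. X \<eta> $ \<mu>) \<xi> (axis a 1))"

text \<open>Euler-Lagrange equations of the action int d^d xi L(X, dX) on Sigma:
  dL/dX^alpha - d_a (dL/d(d_a X^alpha)) = 0 at every point of Sigma, for every alpha.\<close>
definition euler_lagrange ::
  "(real^'D \<Rightarrow> real^'D^'d \<Rightarrow> real) \<Rightarrow> (real^'d::finite) set \<Rightarrow> (real^'d \<Rightarrow> real^'D::finite) \<Rightarrow> bool" where
  "euler_lagrange L \<Sigma> X \<longleftrightarrow>
     (\<forall>\<xi>\<in>\<Sigma>. \<forall>\<alpha>.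
        dirderiv (\<lambda>y. L y (jac X \<xi>)) (X \<xi>) (axis \<alpha> 1)
        - (\<Sum>a\<in>UNIV. dirderiv (\<lambda>\<eta>. dirderiv (\<lambda>Q. L (X \<eta>) Q) (jac X \<eta>) (axis a (axis \<alpha> 1))) \<xi> (axis a 1))
        = 0)"

end

theory Submission
  imports Defs
begin

(* Reparametrisation invariance of the action yields a Noether identity: contracting the
   Euler-Lagrange equations of F(gamma_v) with the tangent vector d_b X, and using that gamma_v
   is homogeneous of degree 2 in each row d_a X of the Jacobian (Euler's relation) together with
   the symmetry of second derivatives of X, one finds

     (F'(gamma_v) + 2 gamma_v F''(gamma_v)) * d_b gamma_v = 0.

   Hence gamma_v is locally constant where 2 s F''(s) + F'(s) does not vanish at s = gamma_v, and
   elsewhere takes values in the discrete, hence countable, set Z.  So gamma_v has countable image,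
   which is connected because Sigma is, and gamma_v is a constant c.

   Once gamma_v = c, the Euler-Lagrange expression of G(gamma_v) is G'(c) times that of gamma_v
   for every G.  With G = F and F'(c) /= 0 this gives the Schild equations, and with G = sqrt
   the Nambu-Goto equations. *)

section \<open>Directional derivatives\<close>

lemma has_real_derivative_along_line:
  fixes f :: "'a::real_normed_vector \<Rightarrow> real"
  assumes "(f has_derivative f') (at (x + t0 *\<^sub>R v))"
  shows "((\<lambda>t. f (x + t *\<^sub>R v)) has_real_derivative f' v) (at t0)"
proof -
  have "((\<lambda>t. x + t *\<^sub>R v) has_derivative (\<lambda>t. t *\<^sub>R v)) (at t0)"
    by (auto intro!: derivative_eq_intros)
  from has_derivative_compose[OF this assms]
  have "((\<lambda>t. f (x + t *\<^sub>R v)) has_derivative (\<lambda>t. f' v * t)) (at t0)"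
    using linear_scale[OF has_derivative_linear[OF assms]] by (simp add: mult.commute)
  then show ?thesis
    by (simp add: has_field_derivative_def)
qed

lemma has_derivative_imp_dirderiv:
  fixes f :: "'a::real_normed_vector \<Rightarrow> real"
  assumes "(f has_derivative f') (at x)"
  shows "dirderiv f x v = f' v"
  unfolding dirderiv_def
  using has_real_derivative_along_line[of f f' x 0 v] assms by (auto intro: DERIV_imp_deriv)

lemma has_real_derivative_dirderiv_along_line:
  fixes f :: "'a::real_normed_vector \<Rightarrow> real"
  assumes "f differentiable (at (x + t0 *\<^sub>R v))"
  shows "((\<lambda>t. f (x + t *\<^sub>R v)) has_real_derivative dirderiv f (x + t0 *\<^sub>R v) v) (at t0)"
proof -
  obtain f' where "(f has_derivative f') (at (x + t0 *\<^sub>R v))"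
    using assms unfolding differentiable_def by blast
  then show ?thesis
    using has_real_derivative_along_line has_derivative_imp_dirderiv by metis
qed

lemma dirderiv_cong_open:
  fixes f g :: "'a::real_normed_vector \<Rightarrow> real"
  assumes "open S" "x \<in> S" "\<And>y. y \<in> S \<Longrightarrow> f y = g y"
  shows "dirderiv f x v = dirderiv g x v"
proof -
  have "open ((\<lambda>t::real. x + t *\<^sub>R v) -` S)"
    by (rule continuous_open_vimage) (auto intro!: continuous_intros assms(1))
  then have "eventually (\<lambda>t. x + t *\<^sub>R v \<in> S) (nhds 0)"
    using assms(2) eventually_nhds_in_open by fastforce
  then have "eventually (\<lambda>t. f (x + t *\<^sub>R v) = g (x + t *\<^sub>R v)) (nhds 0)"
    by eventually_elim (use assms(3) in auto)
  then show ?thesis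
    unfolding dirderiv_def by (rule deriv_cong_ev) simp
qed

lemma dirderiv_mult:
  fixes f g :: "'a::real_normed_vector \<Rightarrow> real"
  assumes "f differentiable (at x)" "g differentiable (at x)"
  shows "dirderiv (\<lambda>y. f y * g y) x v = f x * dirderiv g x v + dirderiv f x v * g x"
proof -
  obtain f' g' where f: "(f has_derivative f') (at x)" and g: "(g has_derivative g') (at x)"
    using assms unfolding differentiable_def by blast
  show ?thesis
    using has_derivative_imp_dirderiv[OF has_derivative_mult[OF f g]]
      has_derivative_imp_dirderiv[OF f] has_derivative_imp_dirderiv[OF g] by simp
qed

lemma dirderiv_cmult:
  fixes f :: "'a::real_normed_vector \<Rightarrow> real"
  assumes "f differentiable (at x)"
  shows "dirderiv (\<lambda>y. c * f y) x v = c * dirderiv f x v"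
  using dirderiv_mult[OF differentiable_const assms]
  by (simp add: has_derivative_imp_dirderiv[OF has_derivative_const])

lemma dirderiv_sum:
  fixes f :: "'i \<Rightarrow> 'a::real_normed_vector \<Rightarrow> real"
  assumes "finite I" "\<And>i. i \<in> I \<Longrightarrow> f i differentiable (at x)"
  shows "dirderiv (\<lambda>y. \<Sum>i\<in>I. f i y) x v = (\<Sum>i\<in>I. dirderiv (f i) x v)"
proof -
  have f: "(f i has_derivative frechet_derivative (f i) (at x)) (at x)" if "i \<in> I" for i
    using assms(2)[OF that] frechet_derivative_works by blast
  then have "((\<lambda>y. \<Sum>i\<in>I. f i y) has_derivative (\<lambda>h. \<Sum>i\<in>I. frechet_derivative (f i) (at x) h)) (at x)"
    by (intro has_derivative_sum)
  then have "dirderiv (\<lambda>y. \<Sum>i\<in>I. f i y) x v = (\<Sum>i\<in>I. frechet_derivative (f i) (at x) v)"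
    by (rule has_derivative_imp_dirderiv)
  also have "\<dots> = (\<Sum>i\<in>I. dirderiv (f i) x v)"
    using has_derivative_imp_dirderiv[OF f] by (intro sum.cong) auto
  finally show ?thesis .
qed

lemma sum_mult_dirderiv:
  fixes p f :: "'i \<Rightarrow> 'a::real_normed_vector \<Rightarrow> real"
  assumes "finite I" "\<And>i. i \<in> I \<Longrightarrow> p i differentiable (at x)" "\<And>i. i \<in> I \<Longrightarrow> f i differentiable (at x)"
  shows "(\<Sum>i\<in>I. p i x * dirderiv (f i) x v)
    = dirderiv (\<lambda>y. \<Sum>i\<in>I. p i y * f i y) x v - (\<Sum>i\<in>I. dirderiv (p i) x v * f i x)"
proof -
  have "dirderiv (\<lambda>y. \<Sum>i\<in>I. p i y * f i y) x v = (\<Sum>i\<in>I. dirderiv (\<lambda>y. p i y * f i y) x v)"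
    using assms by (intro dirderiv_sum differentiable_mult)
  also have "\<dots> = (\<Sum>i\<in>I. p i x * dirderiv (f i) x v + dirderiv (p i) x v * f i x)"
    using assms by (intro sum.cong refl dirderiv_mult)
  finally show ?thesis
    by (simp add: sum.distrib)
qed

lemma dirderiv_compose:
  fixes f :: "'a::real_normed_vector \<Rightarrow> real"
  assumes "(G has_real_derivative G') (at (f x))" "f differentiable (at x)"
  shows "dirderiv (\<lambda>y. G (f y)) x v = G' * dirderiv f x v"
proof -
  obtain f' where f': "(f has_derivative f') (at x)"
    using assms(2) unfolding differentiable_def by blast
  have "((\<lambda>y. G (f y)) has_derivative (\<lambda>h. G' * f' h)) (at x)"
    using has_derivative_compose[OF f' assms(1)[unfolded has_field_derivative_def]] .
  then show ?thesis
    using has_derivative_imp_dirderiv f' by metis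
qed

lemma sum_axis_mult: "(\<Sum>i\<in>UNIV. axis b (1::real) $ i * t i) = t b"
  by (simp add: axis_def if_distrib[where f="\<lambda>x. x * _"] cong: if_cong)

lemma linear_axis_expansion:
  fixes w :: "real^'n::finite"
  assumes "linear L"
  shows "L w = (\<Sum>i\<in>UNIV. w$i * L (axis i 1))"
proof -
  have "L w = L (\<Sum>i\<in>UNIV. w$i *\<^sub>R axis i 1)"
    using basis_expansion[of w] by (simp add: scalar_mult_eq_scaleR)
  also have "\<dots> = (\<Sum>i\<in>UNIV. w$i * L (axis i 1))"
    using assms by (simp add: linear_sum linear_scale)
  finally show ?thesis .
qed

lemma sum_scaleR_axis_axis:
  fixes v :: "real^'m::finite"
  shows "(\<Sum>\<alpha>\<in>UNIV. v$\<alpha> *\<^sub>R axis a (axis \<alpha> 1)) = (axis a v :: real^'m^'n::finite)"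
  using basis_expansion[of v]
  by (simp add: vec_eq_iff axis_def if_distrib[where f="\<lambda>x. _ * x"] if_distrib[where f="\<lambda>x. x $ _"]
      sum.If_cases)

lemma matrix_axis_expansion:
  fixes W :: "real^'m::finite^'n::finite"
  shows "W = (\<Sum>a\<in>UNIV. \<Sum>\<alpha>\<in>UNIV. W$a$\<alpha> *\<^sub>R axis a (axis \<alpha> 1))"
  unfolding sum_scaleR_axis_axis
  by (simp add: vec_eq_iff axis_def if_distrib[where f="\<lambda>x. x $ _"] sum.If_cases)

lemma linear_matrix_axis_expansion:
  fixes W :: "real^'m::finite^'n::finite"
  assumes "linear L"
  shows "L W = (\<Sum>a\<in>UNIV. \<Sum>\<alpha>\<in>UNIV. W$a$\<alpha> * L (axis a (axis \<alpha> 1)))"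
  by (subst matrix_axis_expansion) (simp add: assms linear_sum linear_scale)

lemma has_derivative_axis_expansion:
  fixes f :: "real^'n::finite \<Rightarrow> real"
  assumes "f differentiable (at x)"
  shows "(f has_derivative (\<lambda>v. \<Sum>i\<in>UNIV. v$i * dirderiv f x (axis i 1))) (at x)"
proof -
  obtain f' where f': "(f has_derivative f') (at x)"
    using assms unfolding differentiable_def by blast
  have "f' v = (\<Sum>i\<in>UNIV. v$i * dirderiv f x (axis i 1))" for v
    unfolding linear_axis_expansion[OF has_derivative_linear[OF f'], of v] has_derivative_imp_dirderiv[OF f'] ..
  then have "f' = (\<lambda>v. \<Sum>i\<in>UNIV. v$i * dirderiv f x (axis i 1))" ..
  then show ?thesis
    using f' by simp
qed

lemma has_derivative_vec_nthI:
  fixes f :: "'a::real_normed_vector \<Rightarrow> 'b::euclidean_space^'n::finite"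
  assumes "\<And>i. ((\<lambda>x. f x $ i) has_derivative (\<lambda>h. f' h $ i)) (at x)"
  shows "(f has_derivative f') (at x)"
proof (subst has_derivative_componentwise_within, intro ballI)
  fix b :: "'b^'n"
  assume "b \<in> Basis"
  then obtain i u where b: "b = axis i u" and "u \<in> Basis"
    unfolding Basis_vec_def by auto
  show "((\<lambda>x. f x \<bullet> b) has_derivative (\<lambda>x. f' x \<bullet> b)) (at x)"
    unfolding b inner_axis using has_derivative_inner_left[OF assms[of i], of u] by simp
qed

lemma has_derivative_matrixI:
  fixes f :: "'a::real_normed_vector \<Rightarrow> real^'m::finite^'n::finite"
  assumes "\<And>i j. ((\<lambda>x. f x $ i $ j) has_derivative (\<lambda>h. f' h $ i $ j)) (at x)"
  shows "(f has_derivative f') (at x)"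
  by (intro has_derivative_vec_nthI assms)

section \<open>Symmetry of second directional derivatives\<close>

lemma dist_parallelogram_le:
  fixes x u v :: "'a::real_normed_vector"
  assumes "0 \<le> s" "s \<le> h" "0 \<le> t" "t \<le> h"
  shows "dist (x + s *\<^sub>R u + t *\<^sub>R v) x \<le> h * (norm u + norm v)"
proof -
  have "dist (x + s *\<^sub>R u + t *\<^sub>R v) x = norm (s *\<^sub>R u + t *\<^sub>R v)"
    by (simp add: dist_norm add.assoc)
  also have "\<dots> \<le> s * norm u + t * norm v"
    using norm_triangle_ineq[of "s *\<^sub>R u" "t *\<^sub>R v"] assms by simp
  also have "\<dots> \<le> h * (norm u + norm v)"
    using assms by (simp add: distrib_left add_mono mult_right_mono)
  finally show ?thesis .
qed

lemma second_difference_mvt: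
  fixes f :: "'a::real_normed_vector \<Rightarrow> real"
  assumes df: "\<And>y. y \<in> ball x r \<Longrightarrow> f differentiable (at y)"
    and du: "\<And>y. y \<in> ball x r \<Longrightarrow> (\<lambda>z. dirderiv f z u) differentiable (at y)"
    and h: "0 < h" "h * (norm u + norm v) < r"
  obtains s t where "0 < s" "s < h" "0 < t" "t < h"
    "f (x + h *\<^sub>R u + h *\<^sub>R v) - f (x + h *\<^sub>R u) - f (x + h *\<^sub>R v) + f x
       = h\<^sup>2 * dirderiv (\<lambda>z. dirderiv f z u) (x + s *\<^sub>R u + t *\<^sub>R v) v"
proof -
  have ball: "x + s *\<^sub>R u + t *\<^sub>R v \<in> ball x r" if "0 \<le> s" "s \<le> h" "0 \<le> t" "t \<le> h" for s t
    using dist_parallelogram_le[OF that, of x u v] h by (simp add: dist_commute)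
  define \<phi> where "\<phi> s = f ((x + h *\<^sub>R v) + s *\<^sub>R u) - f (x + s *\<^sub>R u)" for s
  have "\<exists>s. 0 < s \<and> s < h \<and> \<phi> h - \<phi> 0
      = (h - 0) * (dirderiv f ((x + h *\<^sub>R v) + s *\<^sub>R u) u - dirderiv f (x + s *\<^sub>R u) u)"
  proof (rule MVT2)
    fix s assume s: "0 \<le> s" "s \<le> h"
    have "f differentiable (at ((x + h *\<^sub>R v) + s *\<^sub>R u))" "f differentiable (at (x + s *\<^sub>R u))"
      using df ball[of s h] ball[of s 0] s h by (simp_all add: add_ac)
    then show "(\<phi> has_real_derivative
        dirderiv f ((x + h *\<^sub>R v) + s *\<^sub>R u) u - dirderiv f (x + s *\<^sub>R u) u) (at s)"
      unfolding \<phi>_def[abs_def] by (intro DERIV_diff has_real_derivative_dirderiv_along_line)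
  qed (use h in auto)
  then obtain s where s: "0 < s" "s < h" and \<phi>_diff: "\<phi> h - \<phi> 0
      = h * (dirderiv f ((x + s *\<^sub>R u) + h *\<^sub>R v) u - dirderiv f ((x + s *\<^sub>R u) + 0 *\<^sub>R v) u)"
    by (auto simp: add_ac)
  have "\<exists>t. 0 < t \<and> t < h \<and>
      dirderiv f ((x + s *\<^sub>R u) + h *\<^sub>R v) u - dirderiv f ((x + s *\<^sub>R u) + 0 *\<^sub>R v) u
      = (h - 0) * dirderiv (\<lambda>z. dirderiv f z u) ((x + s *\<^sub>R u) + t *\<^sub>R v) v"
  proof (rule MVT2)
    fix t assume "0 \<le> t" "t \<le> h"
    then show "((\<lambda>t. dirderiv f ((x + s *\<^sub>R u) + t *\<^sub>R v) u) has_real_derivative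
        dirderiv (\<lambda>z. dirderiv f z u) ((x + s *\<^sub>R u) + t *\<^sub>R v) v) (at t)"
      using du ball[of s t] s by (intro has_real_derivative_dirderiv_along_line) auto
  qed (use h in auto)
  then obtain t where t: "0 < t" "t < h" and dt:
      "dirderiv f ((x + s *\<^sub>R u) + h *\<^sub>R v) u - dirderiv f ((x + s *\<^sub>R u) + 0 *\<^sub>R v) u
      = h * dirderiv (\<lambda>z. dirderiv f z u) (x + s *\<^sub>R u + t *\<^sub>R v) v"
    by auto
  have "f (x + h *\<^sub>R u + h *\<^sub>R v) - f (x + h *\<^sub>R u) - f (x + h *\<^sub>R v) + f x = \<phi> h - \<phi> 0"
    unfolding \<phi>_def by (simp add: add_ac)
  also have "\<dots> = h\<^sup>2 * dirderiv (\<lambda>z. dirderiv f z u) (x + s *\<^sub>R u + t *\<^sub>R v) v"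
    unfolding \<phi>_diff dt by (simp add: power2_eq_square)
  finally show ?thesis
    by (rule that[OF s t])
qed

text \<open>Both mixed derivatives compute the same second difference of \<open>f\<close> over a small parallelogram.\<close>
lemma mixed_dirderivs_meet_nearby:
  fixes f :: "'a::real_normed_vector \<Rightarrow> real"
  assumes "open S" "x \<in> S"
    and df: "\<And>y. y \<in> S \<Longrightarrow> f differentiable (at y)"
    and du: "\<And>y. y \<in> S \<Longrightarrow> (\<lambda>z. dirderiv f z u) differentiable (at y)"
    and dv: "\<And>y. y \<in> S \<Longrightarrow> (\<lambda>z. dirderiv f z v) differentiable (at y)"
    and "d > 0"
  obtains p q where "dist p x < d" "dist q x < d"
    "dirderiv (\<lambda>z. dirderiv f z u) p v = dirderiv (\<lambda>z. dirderiv f z v) q u"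
proof -
  obtain r where r: "r > 0" "ball x r \<subseteq> S"
    using assms(1,2) open_contains_ball by blast
  define m where "m = min r d"
  define h where "h = m / (norm u + norm v + 1)"
  have m: "m > 0" "m \<le> r" "m \<le> d"
    using r \<open>d > 0\<close> unfolding m_def by auto
  have "norm u + norm v + 1 > 0"
    by (simp add: add_nonneg_pos)
  then have h: "h > 0" "h * (norm u + norm v + 1) = m"
    using m unfolding h_def by simp_all
  then have hm: "h * (norm u + norm v) < m" "h * (norm v + norm u) < m"
    unfolding distrib_left by (simp_all add: add.commute)
  then have hr: "h * (norm u + norm v) < r" "h * (norm v + norm u) < r"
    using m by linarith+
  have "\<And>y. y \<in> ball x r \<Longrightarrow> y \<in> S"
    using r by auto
  then obtain s1 t1 s2 t2 where st: "0 < s1" "s1 < h" "0 < t1" "t1 < h" "0 < s2" "s2 < h" "0 < t2" "t2 < h"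
    and eq1: "f (x + h *\<^sub>R u + h *\<^sub>R v) - f (x + h *\<^sub>R u) - f (x + h *\<^sub>R v) + f x
       = h\<^sup>2 * dirderiv (\<lambda>z. dirderiv f z u) (x + s1 *\<^sub>R u + t1 *\<^sub>R v) v"
    and eq2: "f (x + h *\<^sub>R v + h *\<^sub>R u) - f (x + h *\<^sub>R v) - f (x + h *\<^sub>R u) + f x
       = h\<^sup>2 * dirderiv (\<lambda>z. dirderiv f z v) (x + s2 *\<^sub>R v + t2 *\<^sub>R u) u"
    using second_difference_mvt[of x r f u h v] second_difference_mvt[of x r f v h u] df du dv h hr
    by metis
  have comm: "x + h *\<^sub>R v + h *\<^sub>R u = x + h *\<^sub>R u + h *\<^sub>R v"
    by (simp add: add_ac)
  have "h\<^sup>2 * dirderiv (\<lambda>z. dirderiv f z u) (x + s1 *\<^sub>R u + t1 *\<^sub>R v) v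
      = h\<^sup>2 * dirderiv (\<lambda>z. dirderiv f z v) (x + s2 *\<^sub>R v + t2 *\<^sub>R u) u"
    using eq1 eq2[unfolded comm] by linarith
  then have "dirderiv (\<lambda>z. dirderiv f z u) (x + s1 *\<^sub>R u + t1 *\<^sub>R v) v
      = dirderiv (\<lambda>z. dirderiv f z v) (x + s2 *\<^sub>R v + t2 *\<^sub>R u) u"
    using h by simp
  moreover have "dist (x + s1 *\<^sub>R u + t1 *\<^sub>R v) x \<le> h * (norm u + norm v)"
    "dist (x + s2 *\<^sub>R v + t2 *\<^sub>R u) x \<le> h * (norm v + norm u)"
    using st by (intro dist_parallelogram_le; simp)+
  then have "dist (x + s1 *\<^sub>R u + t1 *\<^sub>R v) x < d" "dist (x + s2 *\<^sub>R v + t2 *\<^sub>R u) x < d"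
    using hm m by linarith+
  ultimately show ?thesis
    using that by blast
qed

lemma dirderiv_commute:
  fixes f :: "'a::real_normed_vector \<Rightarrow> real"
  assumes "open S" "x \<in> S"
    and df: "\<And>y. y \<in> S \<Longrightarrow> f differentiable (at y)"
    and du: "\<And>y. y \<in> S \<Longrightarrow> (\<lambda>z. dirderiv f z u) differentiable (at y)"
    and dv: "\<And>y. y \<in> S \<Longrightarrow> (\<lambda>z. dirderiv f z v) differentiable (at y)"
    and cuv: "continuous (at x) (\<lambda>z. dirderiv (\<lambda>z. dirderiv f z u) z v)"
    and cvu: "continuous (at x) (\<lambda>z. dirderiv (\<lambda>z. dirderiv f z v) z u)"
  shows "dirderiv (\<lambda>z. dirderiv f z u) x v = dirderiv (\<lambda>z. dirderiv f z v) x u"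
proof (rule ccontr)
  define g1 where "g1 = (\<lambda>z. dirderiv (\<lambda>z. dirderiv f z u) z v)"
  define g2 where "g2 = (\<lambda>z. dirderiv (\<lambda>z. dirderiv f z v) z u)"
  define e where "e = \<bar>g1 x - g2 x\<bar> / 2"
  assume "dirderiv (\<lambda>z. dirderiv f z u) x v \<noteq> dirderiv (\<lambda>z. dirderiv f z v) x u"
  then have "e > 0"
    unfolding e_def g1_def g2_def by simp
  then obtain d1 d2 where d: "d1 > 0" "d2 > 0"
    and close: "\<And>y. dist y x < d1 \<Longrightarrow> dist (g1 y) (g1 x) < e" "\<And>y. dist y x < d2 \<Longrightarrow> dist (g2 y) (g2 x) < e"
    using cuv cvu unfolding continuous_at_eps_delta g1_def g2_def by metis
  obtain p q where pq: "dist p x < min d1 d2" "dist q x < min d1 d2" "g1 p = g2 q"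
    using mixed_dirderivs_meet_nearby[OF assms(1-5), of "min d1 d2"] d unfolding g1_def g2_def by auto
  have "\<bar>g1 p - g1 x\<bar> < e" "\<bar>g2 q - g2 x\<bar> < e"
    using close pq(1,2) by (simp_all add: dist_real_def)
  then show False
    using pq(3) unfolding e_def by (auto simp: abs_real_def split: if_splits)
qed

section \<open>The volume form and its derivative\<close>

lemma sigma_eq_det:
  fixes Q :: "real^'D::finite^'d::finite"
  shows "sigma Q \<mu> = det (\<chi> a j. Q $ a $ \<mu> j)"
proof -
  have "sigma Q \<mu> = (\<Sum>p\<in>{p. p permutes (UNIV::'d set)}. of_int (sign p) * (\<Prod>j\<in>UNIV. Q $ p j $ \<mu> j))"
    unfolding sigma_def levi_civita_def by (simp add: if_distrib[of "\<lambda>x. x * _"] sum.If_cases Int_def)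
  also have "\<dots> = det (transpose (\<chi> a j. Q $ a $ \<mu> j))"
    unfolding det_def by (simp add: transpose_def)
  finally show ?thesis
    by (simp add: det_transpose)
qed

lemma sigma_add_row_multiple:
  fixes Q :: "real^'D::finite^'d::finite"
  shows "sigma (Q + t *\<^sub>R axis a (Q $ b)) \<mu> = (if a = b then 1 + t else 1) * sigma Q \<mu>"
proof -
  define R :: "real^'d^'d" where "R = (\<chi> i j. Q $ i $ \<mu> j)"
  have rows: "(\<chi> i j. (Q + t *\<^sub>R axis a (Q $ b)) $ i $ \<mu> j) = (\<chi> i. if i = a then row a R + t *s row b R else row i R)"
    by (simp add: vec_eq_iff R_def row_def axis_def)
  show ?thesis
  proof (cases "a = b")
    case True
    have "(\<chi> i. if i = a then row a R + t *s row b R else row i R) = (\<chi> i. if i = a then (1 + t) *s row i R else row i R)"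
      using True by (simp add: vec_eq_iff algebra_simps)
    then show ?thesis
      using True det_row_mul[of a "1 + t" "\<lambda>i. row i R"] unfolding sigma_eq_det rows
      by (simp add: R_def row_def)
  next
    case False
    then show ?thesis
      using det_row_operation[OF False, of R t] unfolding sigma_eq_det rows by (simp add: R_def row_def)
  qed
qed

definition sigma_deriv :: "real^'D::finite^'d::finite \<Rightarrow> ('d \<Rightarrow> 'D) \<Rightarrow> real^'D^'d \<Rightarrow> real" where
  "sigma_deriv Q \<mu> W = (\<Sum>a\<in>UNIV. levi_civita a *
     (\<Sum>j\<in>UNIV. W $ a j $ \<mu> j * (\<Prod>k\<in>UNIV - {j}. Q $ a k $ \<mu> k)))"

lemma has_derivative_matrix_entry: "((\<lambda>Q. Q $ i $ k) has_derivative (\<lambda>W. W $ i $ k)) F"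
  for Q :: "real^'m::finite^'n::finite"
  by (intro bounded_linear_imp_has_derivative bounded_linear_compose[OF bounded_linear_vec_nth]
      bounded_linear_vec_nth)

lemma has_derivative_sigma: "((\<lambda>Q. sigma Q \<mu>) has_derivative sigma_deriv Q \<mu>) (at Q within S)"
  unfolding sigma_def[abs_def] sigma_deriv_def[abs_def]
  by (intro has_derivative_sum has_derivative_mult_right has_derivative_prod has_derivative_matrix_entry)

lemma differentiable_prod:
  fixes f :: "'i \<Rightarrow> 'a::real_normed_vector \<Rightarrow> real"
  assumes "\<And>i. i \<in> I \<Longrightarrow> f i differentiable (at x within S)"
  shows "(\<lambda>x. \<Prod>i\<in>I. f i x) differentiable (at x within S)"
proof -
  obtain f' where "\<And>i. i \<in> I \<Longrightarrow> (f i has_derivative f' i) (at x within S)"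
    using assms unfolding differentiable_def by metis
  then show ?thesis
    unfolding differentiable_def by (blast intro: has_derivative_prod)
qed

lemma differentiable_sigma_deriv: "(\<lambda>Q. sigma_deriv Q \<mu> W) differentiable (at Q within S)"
  unfolding sigma_deriv_def
  by (intro differentiable_sum differentiable_mult differentiable_const differentiable_prod ballI finite
      has_derivative_matrix_entry[THEN differentiableI])

lemma sigma_deriv_axis_row:
  fixes Q :: "real^'D::finite^'d::finite"
  shows "sigma_deriv Q \<mu> (axis a (Q $ b)) = (if a = b then sigma Q \<mu> else 0)"
proof -
  have "((\<lambda>t. sigma (Q + t *\<^sub>R axis a (Q $ b)) \<mu>) has_real_derivative sigma_deriv Q \<mu> (axis a (Q $ b))) (at 0)"
    using has_real_derivative_along_line[of "\<lambda>Q. sigma Q \<mu>" "sigma_deriv Q \<mu>" Q 0]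
    by (simp add: has_derivative_sigma)
  moreover have "((\<lambda>t. (if a = b then 1 + t else 1) * sigma Q \<mu>) has_real_derivative
      (if a = b then sigma Q \<mu> else 0)) (at 0)"
    by (auto intro!: derivative_eq_intros)
  ultimately show ?thesis
    unfolding sigma_add_row_multiple by (rule DERIV_unique)
qed

section \<open>Derivatives of the volume density\<close>

definition gamma_deriv_Q ::
  "(real^'D \<Rightarrow> ('d \<Rightarrow> 'D) \<Rightarrow> ('d \<Rightarrow> 'D) \<Rightarrow> real) \<Rightarrow> real^'D::finite \<Rightarrow> real^'D^'d::finite \<Rightarrow> real^'D^'d \<Rightarrow> real"
  where "gamma_deriv_Q V y Q W = (\<Sum>\<mu>\<in>UNIV. \<Sum>\<nu>\<in>UNIV.
     V y \<mu> \<nu> * (sigma_deriv Q \<mu> W * sigma Q \<nu> + sigma Q \<mu> * sigma_deriv Q \<nu> W))"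

definition gamma_deriv_x ::
  "(real^'D \<Rightarrow> ('d \<Rightarrow> 'D) \<Rightarrow> ('d \<Rightarrow> 'D) \<Rightarrow> real) \<Rightarrow> real^'D::finite \<Rightarrow> real^'D^'d::finite \<Rightarrow> real^'D \<Rightarrow> real"
  where "gamma_deriv_x V y Q w = (\<Sum>\<mu>\<in>UNIV. \<Sum>\<nu>\<in>UNIV.
     (\<Sum>\<alpha>\<in>UNIV. w $ \<alpha> * dirderiv (\<lambda>y. V y \<mu> \<nu>) y (axis \<alpha> 1)) * sigma Q \<mu> * sigma Q \<nu>)"

lemma has_derivative_gamma_v_Q:
  "((\<lambda>Q. gamma_v V y Q) has_derivative gamma_deriv_Q V y Q) (at Q within S)"
  unfolding gamma_v_def[abs_def] gamma_deriv_Q_def[abs_def]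
  by (rule derivative_eq_intros has_derivative_sigma refl | simp)+ (simp add: algebra_simps)

lemma has_derivative_gamma_v_x:
  assumes "\<And>\<mu> \<nu>. (\<lambda>y. V y \<mu> \<nu>) differentiable (at y)"
  shows "((\<lambda>y. gamma_v V y Q) has_derivative gamma_deriv_x V y Q) (at y)"
  unfolding gamma_v_def[abs_def] gamma_deriv_x_def[abs_def]
  by (rule derivative_eq_intros has_derivative_axis_expansion[OF assms] refl | simp)+

lemma has_derivative_gamma_v_comp:
  assumes x: "(x has_derivative x') (at \<xi>)" and q: "(q has_derivative q') (at \<xi>)"
    and V: "\<And>\<mu> \<nu>. (\<lambda>y. V y \<mu> \<nu>) differentiable (at (x \<xi>))"
  shows "((\<lambda>\<eta>. gamma_v V (x \<eta>) (q \<eta>)) has_derivative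
     (\<lambda>v. gamma_deriv_x V (x \<xi>) (q \<xi>) (x' v) + gamma_deriv_Q V (x \<xi>) (q \<xi>) (q' v))) (at \<xi>)"
proof -
  have V': "((\<lambda>\<eta>. V (x \<eta>) \<mu> \<nu>) has_derivative
      (\<lambda>v. \<Sum>\<alpha>\<in>UNIV. x' v $ \<alpha> * dirderiv (\<lambda>y. V y \<mu> \<nu>) (x \<xi>) (axis \<alpha> 1))) (at \<xi>)" for \<mu> \<nu>
    using has_derivative_compose[OF x has_derivative_axis_expansion[OF V]] by simp
  have \<sigma>': "((\<lambda>\<eta>. sigma (q \<eta>) \<mu>) has_derivative (\<lambda>v. sigma_deriv (q \<xi>) \<mu> (q' v))) (at \<xi>)" for \<mu>
    using has_derivative_compose[OF q has_derivative_sigma] .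
  have "((\<lambda>\<eta>. \<Sum>\<mu>\<in>UNIV. \<Sum>\<nu>\<in>UNIV. V (x \<eta>) \<mu> \<nu> * sigma (q \<eta>) \<mu> * sigma (q \<eta>) \<nu>) has_derivative
     (\<lambda>v. \<Sum>\<mu>\<in>UNIV. \<Sum>\<nu>\<in>UNIV.
        (V (x \<xi>) \<mu> \<nu> * sigma (q \<xi>) \<mu>) * sigma_deriv (q \<xi>) \<nu> (q' v) +
        (V (x \<xi>) \<mu> \<nu> * sigma_deriv (q \<xi>) \<mu> (q' v) +
         (\<Sum>\<alpha>\<in>UNIV. x' v $ \<alpha> * dirderiv (\<lambda>y. V y \<mu> \<nu>) (x \<xi>) (axis \<alpha> 1)) * sigma (q \<xi>) \<mu>)
        * sigma (q \<xi>) \<nu>)) (at \<xi>)"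
    by (intro has_derivative_sum has_derivative_mult V' \<sigma>')
  then show ?thesis
    unfolding gamma_v_def gamma_deriv_x_def gamma_deriv_Q_def
    by (rule has_derivative_eq_rhs) (simp add: fun_eq_iff sum.distrib[symmetric] algebra_simps)
qed

lemma linear_gamma_deriv_Q: "linear (gamma_deriv_Q V y Q)"
  using has_derivative_gamma_v_Q[of V y Q UNIV] has_derivative_linear by blast

lemma linear_gamma_deriv_x: "linear (gamma_deriv_x V y Q)"
proof -
  have "(gamma_deriv_x V y Q has_derivative gamma_deriv_x V y Q) (at 0)"
    unfolding gamma_deriv_x_def[abs_def]
    by (rule derivative_eq_intros refl bounded_linear_imp_has_derivative[OF bounded_linear_vec_nth]
        | simp)+
  then show ?thesis
    using has_derivative_linear by blast
qed

text \<open>Euler's relation for the function \<open>gamma_v V y\<close>, homogeneous of degree 2 in each row of \<open>Q\<close>.\<close>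
lemma gamma_deriv_Q_contract_row:
  fixes Q :: "real^'D::finite^'d::finite"
  shows "(\<Sum>\<alpha>\<in>UNIV. Q $ b $ \<alpha> * gamma_deriv_Q V y Q (axis a (axis \<alpha> 1)))
    = (if a = b then 2 * gamma_v V y Q else 0)"
proof -
  have "(\<Sum>\<alpha>\<in>UNIV. Q $ b $ \<alpha> * gamma_deriv_Q V y Q (axis a (axis \<alpha> 1)))
      = gamma_deriv_Q V y Q (\<Sum>\<alpha>\<in>UNIV. Q $ b $ \<alpha> *\<^sub>R axis a (axis \<alpha> 1))"
    using linear_gamma_deriv_Q[of V y Q] by (simp add: linear_sum linear_scale)
  also have "\<dots> = gamma_deriv_Q V y Q (axis a (Q $ b))"
    by (simp add: sum_scaleR_axis_axis)
  also have "\<dots> = (if a = b then 2 * gamma_v V y Q else 0)"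
    unfolding gamma_deriv_Q_def gamma_v_def sigma_deriv_axis_row
    by (auto simp: sum_distrib_left algebra_simps intro!: sum.cong)
  finally show ?thesis .
qed

section \<open>Functions with countably many critical values\<close>

lemma countable_discrete:
  fixes Z :: "'a::second_countable_topology set"
  assumes "discrete Z"
  shows "countable Z"
proof -
  have open_singleton: "openin (top_of_set Z) {z}" if z: "z \<in> Z" for z
  proof -
    obtain T where "open T" "T \<inter> Z = {z}"
      using discreteD[OF assms z] by (rule isolated_inE)
    then show ?thesis
      unfolding openin_open by (intro exI[of _ T]) blast
  qed
  obtain \<F> where \<F>: "\<F> \<subseteq> (\<lambda>z. {z}) ` Z" "countable \<F>" "\<Union>\<F> = \<Union>((\<lambda>z. {z}) ` Z)"
    by (rule Lindelof_openin[of "(\<lambda>z. {z}) ` Z" Z]) (use open_singleton in auto)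
  have "Z = \<Union>\<F>"
    using \<F>(3) by simp
  moreover have "countable C" if "C \<in> \<F>" for C
    using that \<F>(1) by auto
  ultimately show ?thesis
    using countable_UN[OF \<F>(2), of "\<lambda>C. C"] by simp
qed

lemma countable_image_locally_constant:
  fixes g :: "'a::second_countable_topology \<Rightarrow> 'b"
  assumes "open W" and loc: "\<And>x. x \<in> W \<Longrightarrow> \<exists>T. open T \<and> x \<in> T \<and> (\<forall>z\<in>T. g z = g x)"
  shows "countable (g ` W)"
proof -
  define fiber where "fiber y = W \<inter> g -` {y}" for y
  have "open (fiber y)" for y
  proof (subst open_subopen, intro ballI)
    fix x assume "x \<in> fiber y"
    then obtain T where "open T" "x \<in> T" "\<forall>z\<in>T. g z = g x" "x \<in> W" "g x = y"
      using loc unfolding fiber_def by blast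
    then show "\<exists>T'. open T' \<and> x \<in> T' \<and> T' \<subseteq> fiber y"
      using \<open>open W\<close> unfolding fiber_def by (intro exI[of _ "T \<inter> W"]) auto
  qed
  moreover have "pairwise disjnt (fiber ` g ` W)"
    unfolding fiber_def pairwise_def disjnt_def by auto
  ultimately have "countable (fiber ` g ` W)"
    by (intro countable_disjoint_open_subsets) auto
  moreover have "inj_on fiber (g ` W)"
    by (auto simp: inj_on_def fiber_def)
  ultimately show ?thesis
    by (rule countable_image_inj_on)
qed

lemma constant_on_if_derivative_vanishes_off_countable_values:
  fixes g :: "'a::euclidean_space \<Rightarrow> real"
  assumes "connected S" "continuous_on S g" "countable Z" "open W"
    and off: "\<And>x. x \<in> S \<Longrightarrow> x \<notin> W \<Longrightarrow> g x \<in> Z"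
    and zero: "\<And>x. x \<in> W \<Longrightarrow> (g has_derivative (\<lambda>_. 0)) (at x)"
  shows "g constant_on S"
proof -
  have "\<exists>T. open T \<and> x \<in> T \<and> (\<forall>z\<in>T. g z = g x)" if "x \<in> W" for x
  proof -
    obtain r where r: "r > 0" "ball x r \<subseteq> W"
      using \<open>open W\<close> \<open>x \<in> W\<close> open_contains_ball by blast
    have "\<exists>c. \<forall>z\<in>ball x r. g z = c"
    proof (rule has_derivative_zero_constant)
      fix z assume "z \<in> ball x r"
      then show "(g has_derivative (\<lambda>_. 0)) (at z within ball x r)"
        using r zero by (blast intro: has_derivative_at_withinI)
    qed simp
    then obtain c where "\<forall>z\<in>ball x r. g z = c" ..
    then show ?thesis
      using r by (intro exI[of _ "ball x r"]) auto
  qed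
  then have "countable (g ` W)"
    using countable_image_locally_constant[OF \<open>open W\<close>] by blast
  moreover have "g ` S \<subseteq> g ` W \<union> Z"
    using off by auto
  ultimately have "countable (g ` S)"
    using \<open>countable Z\<close> by (meson countable_Un countable_subset)
  moreover have "connected (g ` S)"
    using assms(2,1) by (rule connected_continuous_image)
  ultimately have "g x = g y" if "x \<in> S" "y \<in> S" for x y
    using connected_uncountable[of "g ` S" "g x" "g y"] that by auto
  then show ?thesis
    unfolding constant_on_def by blast
qed

section \<open>Euler--Lagrange expressions of volume actions\<close>

definition euler_lagrange_expr ::
  "(real^'D \<Rightarrow> real^'D^'d \<Rightarrow> real) \<Rightarrow> (real^'d::finite \<Rightarrow> real^'D::finite) \<Rightarrow> real^'d \<Rightarrow> 'D \<Rightarrow> real"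
  where "euler_lagrange_expr L X \<xi> \<alpha> =
     dirderiv (\<lambda>y. L y (jac X \<xi>)) (X \<xi>) (axis \<alpha> 1)
     - (\<Sum>a\<in>UNIV. dirderiv (\<lambda>\<eta>. dirderiv (\<lambda>Q. L (X \<eta>) Q) (jac X \<eta>) (axis a (axis \<alpha> 1))) \<xi> (axis a 1))"

lemma euler_lagrange_iff_expr:
  "euler_lagrange L \<Sigma> X \<longleftrightarrow> (\<forall>\<xi>\<in>\<Sigma>. \<forall>\<alpha>. euler_lagrange_expr L X \<xi> \<alpha> = 0)"
  unfolding euler_lagrange_def euler_lagrange_expr_def ..

lemma smooth_on_imp_differentiable: "smooth_on S f \<Longrightarrow> x \<in> S \<Longrightarrow> f differentiable (at x)"
  using iter_partial.simps(1) unfolding smooth_on_def by metis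

lemma volume_metric_differentiable:
  assumes "volume_metric M V" "y \<in> M"
  shows "(\<lambda>y. V y \<mu> \<nu>) differentiable (at y)"
proof (rule smooth_on_imp_differentiable)
  show "smooth_on M (\<lambda>x. V x \<mu> \<nu>)"
    using assms(1) unfolding volume_metric_def by simp
qed (rule assms(2))

locale sigma_model =
  fixes \<Sigma> :: "(real^'d::finite) set" and M :: "(real^'D::finite) set"
    and V :: "real^'D \<Rightarrow> ('d \<Rightarrow> 'D) \<Rightarrow> ('d \<Rightarrow> 'D) \<Rightarrow> real"
    and X :: "real^'d \<Rightarrow> real^'D"
  assumes open_Sigma: "open \<Sigma>"
    and V_differentiable: "\<And>y \<mu> \<nu>. y \<in> M \<Longrightarrow> (\<lambda>y. V y \<mu> \<nu>) differentiable (at y)"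
    and X_smooth: "\<And>\<mu>. smooth_on \<Sigma> (\<lambda>\<xi>. X \<xi> $ \<mu>)"
    and X_into: "\<And>\<xi>. \<xi> \<in> \<Sigma> \<Longrightarrow> X \<xi> \<in> M"
begin

abbreviation gamma_X :: "real^'d \<Rightarrow> real"
  where "gamma_X \<xi> \<equiv> gamma_v V (X \<xi>) (jac X \<xi>)"

abbreviation momentum :: "'d \<Rightarrow> 'D \<Rightarrow> real^'d \<Rightarrow> real"
  where "momentum a \<alpha> \<xi> \<equiv> gamma_deriv_Q V (X \<xi>) (jac X \<xi>) (axis a (axis \<alpha> 1))"

lemma differentiable_iter_partial_X:
  "\<xi> \<in> \<Sigma> \<Longrightarrow> iter_partial is (\<lambda>\<eta>. X \<eta> $ \<mu>) differentiable (at \<xi>)"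
  using X_smooth unfolding smooth_on_def by blast

lemma jac_entry_eq_iter_partial: "(\<lambda>\<eta>. jac X \<eta> $ a $ \<mu>) = iter_partial [a] (\<lambda>\<eta>. X \<eta> $ \<mu>)"
  by (simp add: jac_def)

lemma differentiable_jac_entry: "\<xi> \<in> \<Sigma> \<Longrightarrow> (\<lambda>\<eta>. jac X \<eta> $ a $ \<mu>) differentiable (at \<xi>)"
  unfolding jac_entry_eq_iter_partial by (rule differentiable_iter_partial_X)

lemma has_derivative_X: "\<xi> \<in> \<Sigma> \<Longrightarrow> (X has_derivative (\<lambda>v. v v* jac X \<xi>)) (at \<xi>)"
  using has_derivative_axis_expansion[OF smooth_on_imp_differentiable[OF X_smooth]]
  by (intro has_derivative_vec_nthI) (simp add: vector_matrix_mult_def jac_def mult.commute)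

lemma has_derivative_jac:
  "\<xi> \<in> \<Sigma> \<Longrightarrow> (jac X has_derivative
     (\<lambda>v. \<chi> a \<mu>. \<Sum>c\<in>UNIV. v $ c * dirderiv (\<lambda>\<eta>. jac X \<eta> $ a $ \<mu>) \<xi> (axis c 1))) (at \<xi>)"
  using has_derivative_axis_expansion[OF differentiable_jac_entry]
  by (intro has_derivative_matrixI) simp

lemma jac_deriv_symmetric:
  assumes "\<xi> \<in> \<Sigma>"
  shows "dirderiv (\<lambda>\<eta>. jac X \<eta> $ a $ \<mu>) \<xi> (axis c 1) = dirderiv (\<lambda>\<eta>. jac X \<eta> $ c $ \<mu>) \<xi> (axis a 1)"
  unfolding jac_def vec_lambda_beta
proof (rule dirderiv_commute[OF open_Sigma assms])
  fix y assume "y \<in> \<Sigma>"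
  then show "(\<lambda>\<eta>. X \<eta> $ \<mu>) differentiable (at y)"
    "(\<lambda>z. dirderiv (\<lambda>\<eta>. X \<eta> $ \<mu>) z (axis a 1)) differentiable (at y)"
    "(\<lambda>z. dirderiv (\<lambda>\<eta>. X \<eta> $ \<mu>) z (axis c 1)) differentiable (at y)"
    using differentiable_iter_partial_X[of y "[]"] differentiable_iter_partial_X[of y "[a]"]
      differentiable_iter_partial_X[of y "[c]"] by simp_all
next
  show "continuous (at \<xi>) (\<lambda>z. dirderiv (\<lambda>z. dirderiv (\<lambda>\<eta>. X \<eta> $ \<mu>) z (axis a 1)) z (axis c 1))"
    "continuous (at \<xi>) (\<lambda>z. dirderiv (\<lambda>z. dirderiv (\<lambda>\<eta>. X \<eta> $ \<mu>) z (axis c 1)) z (axis a 1))"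
    using differentiable_iter_partial_X[OF assms, of "[c, a]"] differentiable_iter_partial_X[OF assms, of "[a, c]"]
    by (simp_all add: differentiable_imp_continuous_within)
qed

lemma has_derivative_gamma_X:
  assumes "\<xi> \<in> \<Sigma>"
  shows "(gamma_X has_derivative (\<lambda>v. gamma_deriv_x V (X \<xi>) (jac X \<xi>) (v v* jac X \<xi>)
     + gamma_deriv_Q V (X \<xi>) (jac X \<xi>) (\<chi> a \<mu>. \<Sum>c\<in>UNIV. v $ c * dirderiv (\<lambda>\<eta>. jac X \<eta> $ a $ \<mu>) \<xi> (axis c 1))))
     (at \<xi>)"
  by (rule has_derivative_gamma_v_comp[OF has_derivative_X[OF assms] has_derivative_jac[OF assms]
        V_differentiable[OF X_into[OF assms]]])

lemma differentiable_gamma_X: "\<xi> \<in> \<Sigma> \<Longrightarrow> gamma_X differentiable (at \<xi>)"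
  using has_derivative_gamma_X differentiableI by blast

lemma dirderiv_gamma_X:
  assumes "\<xi> \<in> \<Sigma>"
  shows "dirderiv gamma_X \<xi> (axis b 1) = gamma_deriv_x V (X \<xi>) (jac X \<xi>) (jac X \<xi> $ b)
    + (\<Sum>a\<in>UNIV. \<Sum>\<alpha>\<in>UNIV. dirderiv (\<lambda>\<eta>. jac X \<eta> $ b $ \<alpha>) \<xi> (axis a 1) * momentum a \<alpha> \<xi>)"
proof -
  have "axis b 1 v* jac X \<xi> = jac X \<xi> $ b"
    by (simp add: vec_eq_iff vector_matrix_mult_def sum_axis_mult)
  moreover have "gamma_deriv_Q V (X \<xi>) (jac X \<xi>) (\<chi> a \<mu>. dirderiv (\<lambda>\<eta>. jac X \<eta> $ a $ \<mu>) \<xi> (axis b 1))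
      = (\<Sum>a\<in>UNIV. \<Sum>\<alpha>\<in>UNIV. dirderiv (\<lambda>\<eta>. jac X \<eta> $ b $ \<alpha>) \<xi> (axis a 1) * momentum a \<alpha> \<xi>)"
    by (rule trans[OF linear_matrix_axis_expansion[OF linear_gamma_deriv_Q]])
       (simp add: jac_deriv_symmetric[OF assms])
  ultimately show ?thesis
    using has_derivative_imp_dirderiv[OF has_derivative_gamma_X[OF assms], of "axis b 1"]
    by (simp add: sum_axis_mult)
qed

lemma differentiable_momentum:
  assumes "\<xi> \<in> \<Sigma>"
  shows "momentum a \<alpha> differentiable (at \<xi>)"
proof -
  have J: "jac X differentiable (at \<xi>)"
    using has_derivative_jac[OF assms] by (rule differentiableI)
  have "(\<lambda>\<eta>. V (X \<eta>) \<mu> \<nu>) differentiable (at \<xi>)" for \<mu> \<nu>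
    using V_differentiable[OF X_into[OF assms]] has_derivative_X[OF assms, THEN differentiableI]
    by (rule differentiable_compose)
  moreover have "(\<lambda>\<eta>. sigma_deriv (jac X \<eta>) \<mu> W) differentiable (at \<xi>)" for \<mu> W
    using differentiable_sigma_deriv J by (rule differentiable_compose)
  moreover have "(\<lambda>\<eta>. sigma (jac X \<eta>) \<mu>) differentiable (at \<xi>)" for \<mu>
    using has_derivative_sigma[THEN differentiableI] J by (rule differentiable_compose)
  ultimately show ?thesis
    unfolding gamma_deriv_Q_def by (intro differentiable_sum differentiable_mult differentiable_add finite ballI)
qed

lemma euler_lagrange_expr_comp:
  assumes \<xi>: "\<xi> \<in> \<Sigma>" and G: "\<And>\<eta>. \<eta> \<in> \<Sigma> \<Longrightarrow> (G has_real_derivative G' (gamma_X \<eta>)) (at (gamma_X \<eta>))"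
  shows "euler_lagrange_expr (\<lambda>x P. G (gamma_v V x P)) X \<xi> \<alpha>
    = G' (gamma_X \<xi>) * gamma_deriv_x V (X \<xi>) (jac X \<xi>) (axis \<alpha> 1)
      - (\<Sum>a\<in>UNIV. dirderiv (\<lambda>\<eta>. G' (gamma_X \<eta>) * momentum a \<alpha> \<eta>) \<xi> (axis a 1))"
proof -
  have dx: "((\<lambda>y. gamma_v V y (jac X \<xi>)) has_derivative gamma_deriv_x V (X \<xi>) (jac X \<xi>)) (at (X \<xi>))"
    using V_differentiable[OF X_into[OF \<xi>]] by (rule has_derivative_gamma_v_x)
  have dQ: "dirderiv (\<lambda>Q. G (gamma_v V (X \<eta>) Q)) (jac X \<eta>) (axis a (axis \<alpha> 1)) = G' (gamma_X \<eta>) * momentum a \<alpha> \<eta>"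
    if "\<eta> \<in> \<Sigma>" for \<eta> a
    using dirderiv_compose[of G _ "\<lambda>Q. gamma_v V (X \<eta>) Q", OF G[OF that]]
      has_derivative_gamma_v_Q[of V "X \<eta>" "jac X \<eta>" UNIV]
    by (simp add: has_derivative_imp_dirderiv differentiableI)
  show ?thesis
    unfolding euler_lagrange_expr_def
    using dirderiv_compose[of G _ "\<lambda>y. gamma_v V y (jac X \<xi>)", OF G[OF \<xi>]] dx
      dirderiv_cong_open[OF open_Sigma \<xi>, of "\<lambda>\<eta>. dirderiv (\<lambda>Q. G (gamma_v V (X \<eta>) Q)) (jac X \<eta>) _"] dQ
    by (simp add: has_derivative_imp_dirderiv differentiableI)
qed

lemma contracted_momentum_divergence_row:
  assumes \<xi>: "\<xi> \<in> \<Sigma>" and \<phi>: "\<phi> differentiable (at \<xi>)"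
  shows "(\<Sum>\<alpha>\<in>UNIV. jac X \<xi> $ b $ \<alpha> * dirderiv (\<lambda>\<eta>. \<phi> \<eta> * momentum a \<alpha> \<eta>) \<xi> (axis a 1))
    = (if a = b then 2 * dirderiv (\<lambda>\<eta>. \<phi> \<eta> * gamma_X \<eta>) \<xi> (axis b 1) else 0)
      - \<phi> \<xi> * (\<Sum>\<alpha>\<in>UNIV. dirderiv (\<lambda>\<eta>. jac X \<eta> $ b $ \<alpha>) \<xi> (axis a 1) * momentum a \<alpha> \<xi>)"
proof -
  have row: "(\<lambda>\<eta>. \<Sum>\<alpha>\<in>UNIV. jac X \<eta> $ b $ \<alpha> * (\<phi> \<eta> * momentum a \<alpha> \<eta>))
      = (\<lambda>\<eta>. if a = b then 2 * (\<phi> \<eta> * gamma_X \<eta>) else 0)"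
    using gamma_deriv_Q_contract_row[of _ b V _ a]
    by (simp add: fun_eq_iff sum_distrib_left[symmetric] mult.left_commute)
  have "dirderiv (\<lambda>\<eta>. if a = b then 2 * (\<phi> \<eta> * gamma_X \<eta>) else 0) \<xi> (axis a 1)
      = (if a = b then 2 * dirderiv (\<lambda>\<eta>. \<phi> \<eta> * gamma_X \<eta>) \<xi> (axis b 1) else 0)"
    using dirderiv_cmult[OF differentiable_mult[OF \<phi> differentiable_gamma_X[OF \<xi>]], of 2]
    by (simp add: has_derivative_imp_dirderiv[OF has_derivative_const])
  moreover have "(\<Sum>\<alpha>\<in>UNIV. dirderiv (\<lambda>\<eta>. jac X \<eta> $ b $ \<alpha>) \<xi> (axis a 1) * (\<phi> \<xi> * momentum a \<alpha> \<xi>))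
      = \<phi> \<xi> * (\<Sum>\<alpha>\<in>UNIV. dirderiv (\<lambda>\<eta>. jac X \<eta> $ b $ \<alpha>) \<xi> (axis a 1) * momentum a \<alpha> \<xi>)"
    by (simp add: sum_distrib_left mult.left_commute)
  moreover have "(\<Sum>\<alpha>\<in>UNIV. jac X \<xi> $ b $ \<alpha> * dirderiv (\<lambda>\<eta>. \<phi> \<eta> * momentum a \<alpha> \<eta>) \<xi> (axis a 1))
      = dirderiv (\<lambda>\<eta>. \<Sum>\<alpha>\<in>UNIV. jac X \<eta> $ b $ \<alpha> * (\<phi> \<eta> * momentum a \<alpha> \<eta>)) \<xi> (axis a 1)
        - (\<Sum>\<alpha>\<in>UNIV. dirderiv (\<lambda>\<eta>. jac X \<eta> $ b $ \<alpha>) \<xi> (axis a 1) * (\<phi> \<xi> * momentum a \<alpha> \<xi>))"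
    using differentiable_jac_entry[OF \<xi>] differentiable_momentum[OF \<xi>] \<phi>
    by (intro sum_mult_dirderiv differentiable_mult) auto
  ultimately show ?thesis
    unfolding row by simp
qed

lemma contracted_momentum_divergence:
  assumes "\<xi> \<in> \<Sigma>" "\<phi> differentiable (at \<xi>)"
  shows "(\<Sum>a\<in>UNIV. \<Sum>\<alpha>\<in>UNIV. jac X \<xi> $ b $ \<alpha> * dirderiv (\<lambda>\<eta>. \<phi> \<eta> * momentum a \<alpha> \<eta>) \<xi> (axis a 1))
    = 2 * dirderiv (\<lambda>\<eta>. \<phi> \<eta> * gamma_X \<eta>) \<xi> (axis b 1)
      - \<phi> \<xi> * (\<Sum>a\<in>UNIV. \<Sum>\<alpha>\<in>UNIV. dirderiv (\<lambda>\<eta>. jac X \<eta> $ b $ \<alpha>) \<xi> (axis a 1) * momentum a \<alpha> \<xi>)"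
  unfolding contracted_momentum_divergence_row[OF assms] by (simp add: sum_subtractf sum_distrib_left)

text \<open>Contracting the Euler--Lagrange equations of \<open>F \<circ> gamma_v\<close> with \<open>\<partial>\<^sub>b X\<close> yields a
  Noether identity for the invariance under reparametrisations of \<open>\<Sigma>\<close>.\<close>
lemma noether_identity:
  assumes \<xi>: "\<xi> \<in> \<Sigma>" and pos: "\<And>\<eta>. \<eta> \<in> \<Sigma> \<Longrightarrow> gamma_X \<eta> > 0"
    and F: "\<And>s. s > 0 \<Longrightarrow> (F has_real_derivative F' s) (at s)"
    and F': "\<And>s. s > 0 \<Longrightarrow> (F' has_real_derivative F'' s) (at s)"
    and EL: "\<And>\<alpha>. euler_lagrange_expr (\<lambda>x P. F (gamma_v V x P)) X \<xi> \<alpha> = 0"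
  shows "(F' (gamma_X \<xi>) + 2 * gamma_X \<xi> * F'' (gamma_X \<xi>)) * dirderiv gamma_X \<xi> (axis b 1) = 0"
proof -
  define S where "S = (\<Sum>a\<in>UNIV. \<Sum>\<alpha>\<in>UNIV. dirderiv (\<lambda>\<eta>. jac X \<eta> $ b $ \<alpha>) \<xi> (axis a 1) * momentum a \<alpha> \<xi>)"
  have dg: "gamma_X differentiable (at \<xi>)"
    using \<xi> by (rule differentiable_gamma_X)
  have dF'g: "(\<lambda>\<eta>. F' (gamma_X \<eta>)) differentiable (at \<xi>)"
    using F'[OF pos[OF \<xi>], THEN has_field_derivative_imp_has_derivative, THEN differentiableI] dg
    by (rule differentiable_compose)
  have EL': "F' (gamma_X \<xi>) * gamma_deriv_x V (X \<xi>) (jac X \<xi>) (axis \<alpha> 1)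
      = (\<Sum>a\<in>UNIV. dirderiv (\<lambda>\<eta>. F' (gamma_X \<eta>) * momentum a \<alpha> \<eta>) \<xi> (axis a 1))" for \<alpha>
    using EL[of \<alpha>] euler_lagrange_expr_comp[OF \<xi> F[OF pos]] by simp
  have "F' (gamma_X \<xi>) * gamma_deriv_x V (X \<xi>) (jac X \<xi>) (jac X \<xi> $ b)
      = (\<Sum>\<alpha>\<in>UNIV. jac X \<xi> $ b $ \<alpha> * (F' (gamma_X \<xi>) * gamma_deriv_x V (X \<xi>) (jac X \<xi>) (axis \<alpha> 1)))"
    by (subst linear_axis_expansion[OF linear_gamma_deriv_x]) (simp add: sum_distrib_left mult.left_commute)
  also have "\<dots> = (\<Sum>a\<in>UNIV. \<Sum>\<alpha>\<in>UNIV. jac X \<xi> $ b $ \<alpha>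
      * dirderiv (\<lambda>\<eta>. F' (gamma_X \<eta>) * momentum a \<alpha> \<eta>) \<xi> (axis a 1))"
    unfolding EL' sum_distrib_left by (rule sum.swap)
  also have "\<dots> = 2 * dirderiv (\<lambda>\<eta>. F' (gamma_X \<eta>) * gamma_X \<eta>) \<xi> (axis b 1) - F' (gamma_X \<xi>) * S"
    unfolding S_def using \<xi> dF'g by (rule contracted_momentum_divergence)
  also have "dirderiv (\<lambda>\<eta>. F' (gamma_X \<eta>) * gamma_X \<eta>) \<xi> (axis b 1)
      = (F' (gamma_X \<xi>) + gamma_X \<xi> * F'' (gamma_X \<xi>)) * dirderiv gamma_X \<xi> (axis b 1)"
    using dirderiv_mult[OF dF'g dg] dirderiv_compose[OF F'[OF pos[OF \<xi>]] dg] by (simp add: algebra_simps)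
  finally show ?thesis
    using dirderiv_gamma_X[OF \<xi>, of b] unfolding S_def[symmetric] by (simp add: algebra_simps)
qed

lemma gamma_X_constant_on:
  assumes "connected \<Sigma>" and pos: "\<And>\<xi>. \<xi> \<in> \<Sigma> \<Longrightarrow> gamma_X \<xi> > 0"
    and F: "\<And>s. s > 0 \<Longrightarrow> (F has_real_derivative F' s) (at s)"
    and F': "\<And>s. s > 0 \<Longrightarrow> (F' has_real_derivative F'' s) (at s)"
    and "continuous_on {0<..} F''"
    and Z: "discrete {s. s > 0 \<and> 2 * s * F'' s + F' s = 0}"
    and EL: "euler_lagrange (\<lambda>x P. F (gamma_v V x P)) \<Sigma> X"
  shows "gamma_X constant_on \<Sigma>"
proof -
  define h where "h s = 2 * s * F'' s + F' s" for s
  have g_cont: "continuous_on \<Sigma> gamma_X"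
    using differentiable_gamma_X differentiable_imp_continuous_within continuous_at_imp_continuous_on
    by blast
  have "continuous_on {0<..} F'"
    using F' DERIV_isCont continuous_at_imp_continuous_on by (metis greaterThan_iff)
  then have "continuous_on {0<..} h"
    unfolding h_def[abs_def] using \<open>continuous_on {0<..} F''\<close> by (intro continuous_intros)
  then have "continuous_on \<Sigma> (\<lambda>\<xi>. h (gamma_X \<xi>))"
    using g_cont pos by (auto intro: continuous_on_compose2)
  moreover define W where "W = \<Sigma> \<inter> (\<lambda>\<xi>. h (gamma_X \<xi>)) -` (- {0})"
  ultimately have "open W"
    using open_Sigma by (auto intro: continuous_open_preimage)
  then show ?thesis
  proof (rule constant_on_if_derivative_vanishes_off_countable_values[OF \<open>connected \<Sigma>\<close> g_cont
        countable_discrete[OF Z]])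
    fix \<xi> assume "\<xi> \<in> \<Sigma>" "\<xi> \<notin> W"
    then show "gamma_X \<xi> \<in> {s. s > 0 \<and> 2 * s * F'' s + F' s = 0}"
      using pos unfolding W_def h_def by auto
  next
    fix \<xi> assume "\<xi> \<in> W"
    then have \<xi>: "\<xi> \<in> \<Sigma>" and "F' (gamma_X \<xi>) + 2 * gamma_X \<xi> * F'' (gamma_X \<xi>) \<noteq> 0"
      unfolding W_def h_def by (auto simp: add.commute)
    then have "dirderiv gamma_X \<xi> (axis b 1) = 0" for b
      using noether_identity[OF \<xi> pos F F'] EL \<xi> unfolding euler_lagrange_iff_expr by simp
    then show "(gamma_X has_derivative (\<lambda>_. 0)) (at \<xi>)"
      using has_derivative_axis_expansion[OF differentiable_gamma_X[OF \<xi>]] by simp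
  qed
qed

lemma euler_lagrange_expr_comp_const:
  assumes \<xi>: "\<xi> \<in> \<Sigma>" and const: "\<And>\<eta>. \<eta> \<in> \<Sigma> \<Longrightarrow> gamma_X \<eta> = c"
    and G: "(G has_real_derivative G'c) (at c)"
  shows "euler_lagrange_expr (\<lambda>x P. G (gamma_v V x P)) X \<xi> \<alpha>
    = G'c * euler_lagrange_expr (\<lambda>x P. gamma_v V x P) X \<xi> \<alpha>"
proof -
  have "(G has_real_derivative G'c) (at (gamma_X \<eta>))" if "\<eta> \<in> \<Sigma>" for \<eta>
    using G const[OF that] by simp
  then have "euler_lagrange_expr (\<lambda>x P. G (gamma_v V x P)) X \<xi> \<alpha>
      = G'c * gamma_deriv_x V (X \<xi>) (jac X \<xi>) (axis \<alpha> 1)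
        - (\<Sum>a\<in>UNIV. dirderiv (\<lambda>\<eta>. G'c * momentum a \<alpha> \<eta>) \<xi> (axis a 1))"
    by (rule euler_lagrange_expr_comp[of \<xi> G "\<lambda>_. G'c", OF \<xi>])
  moreover have "euler_lagrange_expr (\<lambda>x P. gamma_v V x P) X \<xi> \<alpha>
      = 1 * gamma_deriv_x V (X \<xi>) (jac X \<xi>) (axis \<alpha> 1)
        - (\<Sum>a\<in>UNIV. dirderiv (\<lambda>\<eta>. 1 * momentum a \<alpha> \<eta>) \<xi> (axis a 1))"
    by (rule euler_lagrange_expr_comp[of \<xi> "\<lambda>s. s" "\<lambda>_. 1", OF \<xi> DERIV_ident])
  ultimately show ?thesis
    using dirderiv_cmult[OF differentiable_momentum[OF \<xi>]] by (simp add: sum_distrib_left right_diff_distrib)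
qed

lemma euler_lagrange_Schild_and_Nambu_Goto:
  assumes const: "\<And>\<xi>. \<xi> \<in> \<Sigma> \<Longrightarrow> gamma_X \<xi> = c" and "c > 0"
    and F: "(F has_real_derivative F'c) (at c)" and "F'c \<noteq> 0"
    and EL: "euler_lagrange (\<lambda>x P. F (gamma_v V x P)) \<Sigma> X"
  shows "euler_lagrange (\<lambda>x P. gamma_v V x P) \<Sigma> X \<and> euler_lagrange (\<lambda>x P. sqrt (gamma_v V x P)) \<Sigma> X"
proof -
  have Schild: "euler_lagrange_expr (\<lambda>x P. gamma_v V x P) X \<xi> \<alpha> = 0" if "\<xi> \<in> \<Sigma>" for \<xi> \<alpha>
    using EL that euler_lagrange_expr_comp_const[OF that const F] \<open>F'c \<noteq> 0\<close>
    unfolding euler_lagrange_iff_expr by simp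
  moreover have "euler_lagrange_expr (\<lambda>x P. sqrt (gamma_v V x P)) X \<xi> \<alpha> = 0" if "\<xi> \<in> \<Sigma>" for \<xi> \<alpha>
    using euler_lagrange_expr_comp_const[OF that const DERIV_real_sqrt[OF \<open>c > 0\<close>]] Schild[OF that] by simp
  ultimately show ?thesis
    unfolding euler_lagrange_iff_expr by blast
qed

end

theorem mainTheorem4:
  fixes \<Sigma> :: "(real^'d::finite) set"
    and M :: "(real^'D::finite) set"
    and V :: "real^'D \<Rightarrow> ('d \<Rightarrow> 'D) \<Rightarrow> ('d \<Rightarrow> 'D) \<Rightarrow> real"
    and X :: "real^'d \<Rightarrow> real^'D"
    and F F' F'' :: "real \<Rightarrow> real"
  assumes open_Sigma: "open \<Sigma>" and conn_Sigma: "connected \<Sigma>"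
    and open_M: "open M"
    and vm: "volume_metric M V"
    and F_deriv: "\<forall>s>0. (F has_real_derivative F' s) (at s)"
    and F'_deriv: "\<forall>s>0. (F' has_real_derivative F'' s) (at s)"
    and F''_cont: "continuous_on {0<..} F''"
    and Z_discrete: "discrete {s::real. s > 0 \<and> 2 * s * F'' s + F' s = 0}"
    and X_smooth: "\<forall>\<mu>. smooth_on \<Sigma> (\<lambda>\<xi>. X \<xi> $ \<mu>)"
    and X_into: "\<forall>\<xi>\<in>\<Sigma>. X \<xi> \<in> M"
    and gamma_pos: "\<forall>\<xi>\<in>\<Sigma>. gamma_v V (X \<xi>) (jac X \<xi>) > 0"
    and EL_F: "euler_lagrange (\<lambda>x P. F (gamma_v V x P)) \<Sigma> X"
  shows "\<exists>c>0. (\<forall>\<xi>\<in>\<Sigma>. gamma_v V (X \<xi>) (jac X \<xi>) = c) \<and>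
           (F' c \<noteq> 0 \<longrightarrow>
              euler_lagrange (\<lambda>x P. gamma_v V x P) \<Sigma> X \<and>
              euler_lagrange (\<lambda>x P. sqrt (gamma_v V x P)) \<Sigma> X)"
proof -
  interpret sigma_model \<Sigma> M V X
    using open_Sigma volume_metric_differentiable[OF vm] X_smooth X_into by unfold_locales auto
  obtain c where c: "\<And>\<xi>. \<xi> \<in> \<Sigma> \<Longrightarrow> gamma_v V (X \<xi>) (jac X \<xi>) = c"
    using gamma_X_constant_on[OF conn_Sigma _ _ _ F''_cont Z_discrete EL_F] gamma_pos F_deriv F'_deriv
    unfolding constant_on_def by blast
  show ?thesis
  proof (cases "\<Sigma> = {}")
    case True
    then show ?thesis
      unfolding euler_lagrange_def by (intro exI[of _ 1]) auto
  next
    case False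
    then have "c > 0"
      using c gamma_pos by force
    then show ?thesis
      using c euler_lagrange_Schild_and_Nambu_Goto[OF c \<open>c > 0\<close>] F_deriv EL_F by blast
  qed
qed

end
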